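(* Let $t_1,\dots,t_d$ be positive integers with $t_i\le n_i$ for all $i$ and $t_1=t_2t_3\cdots t_d$. Then $G$ acts transitively on the set $\Lambda_{t_1\dots t_d}=\mathrm{mrank}^{-1}(t_1,\dots,t_d)$ of tensors in $V$ of multilinear rank $(t_1,\dots,t_d)$; in particular $\Lambda_{t_1\dots t_d}=G\cdot T$ with $$T=\sum_{\beta_2=1}^{t_2}\cdots\sum_{\beta_d=1}^{t_d} e_1^{\iota(\beta_2,\dots,\beta_d)}\otimes e_2^{\beta_2}\otimes\cdots\otimes e_d^{\beta_d}.$$
   Context: Fix integers $d\ge 3$ and $n_1,\dots,n_d\ge 2$. $V=\mathbb{R}^{n_1}\otimes\cdots\otimes\mathbb{R}^{n_d}$, and $G=\mathrm{GL}(n_1)\times\cdots\times\mathrm{GL}(n_d)$ acts on $V$ by $(g_1,\dots,g_d)\cdot(v_1\otimes\cdots\otimes v_d)=(g_1v_1)\otimes\cdots\otimes(g_dv_d)$, extended linearly. $e_i^1,\dots,e_i^{n_i}$ is the standard basis of $\mathbb{R}^{n_i}$. The multilinear rank of $T\in V$ is $(t_1,\dots,t_d)$ where $t_i$ is the rank of $T$ viewed as a linear map $\mathbb{R}^{n_i}\to\bigotimes_{j\ne i}\mathbb{R}^{n_j}$. $\iota:[t_2]\times\cdots\times[t_d]\to[t_1]$ is the lexicographic bijection with $\beta_2$ most significant (the ordering for which the Kronecker product satisfies $(A_2\otimes\cdots\otimes A_d)_{\iota(\beta),\iota(\gamma)}=\prod_{i}(A_i)_{\beta_i\gamma_i}$).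 *)

theory Defs
  imports Complex_Main "HOL-Library.Function_Algebras"
begin

text \<open>The d tensor factors are indexed by i in {0..<d} (factor i here is
factor i+1 of the paper). Basis indices are 0-based: e_i^a with a < n i.\<close>

type_synonym tensor = "(nat \<Rightarrow> nat) \<Rightarrow> real"

definition idx :: "nat \<Rightarrow> (nat \<Rightarrow> nat) \<Rightarrow> (nat \<Rightarrow> nat) set" where
  "idx d n = {k. (\<forall>i<d. k i < n i) \<and> (\<forall>i\<ge>d. k i = 0)}"

definition tensors :: "nat \<Rightarrow> (nat \<Rightarrow> nat) \<Rightarrow> tensor set" where
  "tensors d n = {T. \<forall>k. k \<notin> idx d n \<longrightarrow> T k = 0}"

text \<open>Invertible m x m real matrices, given as functions nat => nat => real (entries
outside the range are irrelevant).\<close>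
definition invertible_mat :: "nat \<Rightarrow> (nat \<Rightarrow> nat \<Rightarrow> real) \<Rightarrow> bool" where
  "invertible_mat m A \<longleftrightarrow> (\<exists>B. (\<forall>a<m. \<forall>b<m. (\<Sum>c<m. A a c * B c b) = (if a = b then 1 else 0))
                              \<and> (\<forall>a<m. \<forall>b<m. (\<Sum>c<m. B a c * A c b) = (if a = b then 1 else 0)))"

definition GL_prod :: "nat \<Rightarrow> (nat \<Rightarrow> nat) \<Rightarrow> (nat \<Rightarrow> nat \<Rightarrow> nat \<Rightarrow> real) set" where
  "GL_prod d n = {g. \<forall>i<d. invertible_mat (n i) (g i)}"

definition act :: "nat \<Rightarrow> (nat \<Rightarrow> nat) \<Rightarrow> (nat \<Rightarrow> nat \<Rightarrow> nat \<Rightarrow> real) \<Rightarrow> tensor \<Rightarrow> tensor" where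
  "act d n g T = (\<lambda>k. if k \<in> idx d n
      then (\<Sum>l\<in>idx d n. (\<Prod>i<d. g i (k i) (l i)) * T l) else 0)"

text \<open>The flattening of T along mode i, as a linear map from R^{n_i} (vectors x with
x a = 0 for a >= n i) to the tensor product of the other factors (tensors with k i = 0).\<close>
definition flatten :: "nat \<Rightarrow> (nat \<Rightarrow> nat) \<Rightarrow> tensor \<Rightarrow> nat \<Rightarrow> (nat \<Rightarrow> real) \<Rightarrow> tensor" where
  "flatten d n T i x = (\<lambda>k. if k i = 0 then (\<Sum>a<n i. x a * T (k(i := a))) else 0)"

definition rscale :: "real \<Rightarrow> tensor \<Rightarrow> tensor" where
  "rscale c f = (\<lambda>k. c * f k)"

definition mrank :: "nat \<Rightarrow> (nat \<Rightarrow> nat) \<Rightarrow> tensor \<Rightarrow> nat \<Rightarrow> nat" where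
  "mrank d n T i = vector_space.dim rscale (flatten d n T i ` {x. \<forall>a\<ge>n i. x a = 0})"

definition Lambda :: "nat \<Rightarrow> (nat \<Rightarrow> nat) \<Rightarrow> (nat \<Rightarrow> nat) \<Rightarrow> tensor set" where
  "Lambda d n t = {S \<in> tensors d n. \<forall>i<d. mrank d n S i = t i}"

text \<open>Lexicographic bijection iota (0-based), factor 1 (paper's beta_2) most significant.\<close>
definition iota :: "nat \<Rightarrow> (nat \<Rightarrow> nat) \<Rightarrow> (nat \<Rightarrow> nat) \<Rightarrow> nat" where
  "iota d t k = (\<Sum>i\<in>{1..<d}. k i * (\<Prod>j\<in>{i<..<d}. t j))"

definition normal_tensor :: "nat \<Rightarrow> (nat \<Rightarrow> nat) \<Rightarrow> (nat \<Rightarrow> nat) \<Rightarrow> tensor" where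
  "normal_tensor d n t = (\<lambda>k. if k \<in> idx d n \<and> (\<forall>i\<in>{1..<d}. k i < t i) \<and> k 0 = iota d t k
                               then 1 else 0)"

end

theory Submission
  imports Defs "Jordan_Normal_Form.Determinant"
begin

(*
  The multilinear rank is G-invariant: the a-th mode-j slice of g.S is the image, under a linear
  map of the tensor space, of the combination of the mode-j slices of S given by row a of g j.

  Conversely let S have multilinear rank t. For each mode j >= 1 an invertible row reduction of
  the mode-j slices turns all slices with index >= t j into 0, so afterwards S is supported on
  indices with k j < t j for j >= 1. Its mode-0 slices then lie in the space of functions on the
  core indices idx d (t(0 := 1)), of dimension t 1 * ... * t (d - 1) = t 0; as they span a space
  of dimension t 0, they span all of it. One more row reduction, in mode 0, maps them onto the
  mode-0 slices of the normal tensor, which are the point masses on the core indices ordered by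
  iota.
*)

definition rows_independent :: "nat \<Rightarrow> (nat \<Rightarrow> nat \<Rightarrow> 'a::field) \<Rightarrow> bool" where
  "rows_independent m A \<longleftrightarrow>
     (\<forall>x. (\<forall>b<m. (\<Sum>a<m. x a * A a b) = 0) \<longrightarrow> (\<forall>a<m. x a = 0))"

lemma invertible_mat_if_rows_independent:
  assumes "rows_independent m A"
  shows "Defs.invertible_mat m A"
proof -
  define M where "M = mat m m (\<lambda>(a, b). A a b)"
  have M: "M \<in> carrier_mat m m" by (simp add: M_def)
  have "det (transpose_mat M) \<noteq> 0"
  proof
    assume "det (transpose_mat M) = 0"
    then obtain v where v: "v \<in> carrier_vec m" "v \<noteq> 0\<^sub>v m" "transpose_mat M *\<^sub>v v = 0\<^sub>v m"
      using det_0_iff_vec_prod_zero[of "transpose_mat M" m] M by auto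
    have "\<forall>b<m. (\<Sum>a<m. v $ a * A a b) = 0"
    proof (intro allI impI)
      fix b assume b: "b < m"
      have "(transpose_mat M *\<^sub>v v) $ b = 0" using v(3) b by simp
      then show "(\<Sum>a<m. v $ a * A a b) = 0"
        using b v(1) by (simp add: M_def mult_mat_vec_def scalar_prod_def lessThan_atLeast0 mult.commute)
    qed
    then have "v = 0\<^sub>v m"
      using assms v(1) by (intro eq_vecI) (auto simp: rows_independent_def)
    with v(2) show False by simp
  qed
  then have "det M \<noteq> 0" by (simp add: det_transpose[OF M])
  from det_non_zero_imp_unit[OF M this, of undefined]
  obtain B where B: "B \<in> carrier_mat m m" "B * M = 1\<^sub>m m" "M * B = 1\<^sub>m m"
    by (auto simp: Units_def ring_mat_def)
  show ?thesis unfolding Defs.invertible_mat_def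
  proof (intro exI[of _ "\<lambda>a b. B $$ (a, b)"] conjI allI impI)
    fix a b assume "a < m" "b < m"
    then show "(\<Sum>c<m. A a c * B $$ (c, b)) = (if a = b then 1 else 0)"
      using B(1) arg_cong[OF B(3), of "\<lambda>C. C $$ (a, b)"]
      by (simp add: M_def scalar_prod_def lessThan_atLeast0)
  next
    fix a b assume "a < m" "b < m"
    then show "(\<Sum>c<m. B $$ (a, c) * A c b) = (if a = b then 1 else 0)"
      using B(1) arg_cong[OF B(2), of "\<lambda>C. C $$ (a, b)"]
      by (simp add: M_def scalar_prod_def lessThan_atLeast0)
  qed
qed

lemma rows_independent_if_invertible_mat:
  assumes "Defs.invertible_mat m A"
  shows "rows_independent m A"
  unfolding rows_independent_def
proof (intro allI impI)
  fix x c assume x: "\<forall>b<m. (\<Sum>a<m. x a * A a b) = 0" and c: "c < m"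
  obtain B where B: "\<forall>a<m. \<forall>b<m. (\<Sum>e<m. A a e * B e b) = (if a = b then 1 else 0)"
    using assms unfolding Defs.invertible_mat_def by blast
  have "x c = (\<Sum>a<m. x a * (if a = c then 1 else 0))" using c by (simp add: if_distrib cong: if_cong)
  also have "\<dots> = (\<Sum>a<m. x a * (\<Sum>b<m. A a b * B b c))" using B c by simp
  also have "\<dots> = (\<Sum>b<m. (\<Sum>a<m. x a * A a b) * B b c)"
    by (simp add: sum_distrib_left sum_distrib_right mult.assoc) (rule sum.swap)
  also have "\<dots> = 0" using x by simp
  finally show "x c = 0" .
qed

lemma invertible_mat_iff_rows_independent:
  "Defs.invertible_mat m A \<longleftrightarrow> rows_independent m A"
  using invertible_mat_if_rows_independent rows_independent_if_invertible_mat by blast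

lemma rows_independent_if_unit_columns:
  assumes "r \<le> m"
    and unit: "\<forall>a'\<in>{r..<m}. f a' < m \<and> (\<forall>a<m. A a (f a') = (if a = a' then 1 else 0))"
    and top: "\<forall>x. (\<forall>b<m. (\<Sum>a<r. x a * A a b) = 0) \<longrightarrow> (\<forall>a<r. x a = 0)"
  shows "rows_independent m A"
  unfolding rows_independent_def
proof (intro allI impI)
  fix x c assume x: "\<forall>b<m. (\<Sum>a<m. x a * A a b) = 0" and "c < m"
  have high: "x a' = 0" if "a' \<in> {r..<m}" for a'
  proof -
    have "x a' = (\<Sum>a<m. if a = a' then x a else 0)"
      using that by simp
    also have "\<dots> = (\<Sum>a<m. x a * A a (f a'))"
      using unit that by (intro sum.cong) auto
    also have "\<dots> = 0"
      using x unit that by blast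
    finally show ?thesis .
  qed
  have "(\<Sum>a<r. x a * A a b) = (\<Sum>a<m. x a * A a b)" for b
    using assms(1) high by (intro sum.mono_neutral_cong_left) auto
  then have "\<forall>a<r. x a = 0"
    using x top by simp
  with high \<open>c < m\<close> show "x c = 0"
    by (meson atLeastLessThan_iff not_le)
qed

text \<open>Rows \<open>a < r\<close> are the coefficients \<open>cu a\<close> of \<open>u a\<close> over the basis \<open>v ` I\<close>; a row
  \<open>a \<ge> r\<close> is the linear relation expressing \<open>v (f a)\<close>, for a column \<open>f a \<notin> I\<close>, over that basis.\<close>

definition reduction_matrix ::
    "nat \<Rightarrow> (nat \<Rightarrow> nat) \<Rightarrow> nat set \<Rightarrow> (nat \<Rightarrow> nat \<Rightarrow> 'a::ring_1) \<Rightarrow> (nat \<Rightarrow> nat \<Rightarrow> 'a) \<Rightarrow> nat \<Rightarrow> nat \<Rightarrow> 'a" where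
  "reduction_matrix r f I cu cv a b =
     (if a < r then (if b \<in> I then cu a b else 0)
      else (if b = f a then 1 else 0) - (if b \<in> I then cv (f a) b else 0))"

context vector_space
begin

lemma scalars_zero_if_independent_image:
  assumes "inj_on u A" "independent (u ` A)" "finite A"
    and "(\<Sum>a\<in>A. scale (x a) (u a)) = 0" "a \<in> A"
  shows "x a = 0"
proof -
  define c where "c w = x (inv_into A u w)" for w
  have "(\<Sum>w\<in>u ` A. scale (c w) w) = (\<Sum>a\<in>A. scale (c (u a)) (u a))"
    by (rule sum.reindex[OF assms(1), unfolded comp_def])
  also have "\<dots> = (\<Sum>a\<in>A. scale (x a) (u a))"
    using assms(1) by (intro sum.cong) (simp_all add: c_def)
  finally have "(\<Sum>w\<in>u ` A. scale (c w) w) = 0"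
    using assms(4) by simp
  then have "\<forall>w\<in>u ` A. c w = 0"
    using assms(2,3) unfolding independent_explicit_finite_subsets
    by (meson finite_imageI order_refl)
  then show ?thesis
    using assms(1,5) by (simp add: c_def)
qed

lemma span_eq_if_dim_eq_card_independent:
  assumes "V \<subseteq> span U" "finite U" "independent U" "dim V = card U"
  shows "span V = span U"
proof
  show "span V \<subseteq> span U"
    using assms(1) by (simp add: span_minimal)
  obtain B where B: "B \<subseteq> V" "independent B" "V \<subseteq> span B" "card B = dim V"
    by (rule basis_exists)
  have B_U: "B \<subseteq> span U" using B(1) assms(1) by blast
  have "finite B" using independent_span_bound[OF assms(2) B(2) B_U] by blast
  have "U \<subseteq> span B"
  proof
    fix x assume x: "x \<in> U"
    show "x \<in> span B"
    proof (rule ccontr)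
      assume "x \<notin> span B"
      then have "independent (insert x B)" "x \<notin> B"
        using B(2) independent_insertI span_base by auto
      moreover have "insert x B \<subseteq> span U" using B_U x span_base by blast
      ultimately have "card (insert x B) \<le> card U"
        using independent_span_bound[OF assms(2)] by blast
      then have "card B + 1 \<le> card U"
        using \<open>finite B\<close> \<open>x \<notin> B\<close> by simp
      then show False using B(4) assms(4) by simp
    qed
  qed
  then show "span U \<subseteq> span V"
    using B(1) span_mono span_minimal subspace_span by (metis subset_trans)
qed

lemma exists_independent_subfamily:
  obtains I where "I \<subseteq> A" "inj_on v I" "independent (v ` I)" "v ` A \<subseteq> span (v ` I)"
proof -
  obtain B where B: "B \<subseteq> v ` A" "independent B" "v ` A \<subseteq> span B"
    by (rule maximal_independent_subset)
  define I where "I = inv_into A v ` B"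
  have "I \<subseteq> A"
    using B(1) by (auto simp: I_def intro: inv_into_into)
  moreover have "v ` I = B"
    using B(1) by (force simp: I_def image_image f_inv_into_f)
  moreover have "inj_on v I"
    using B(1) by (intro inj_on_inverseI[where g = "inv_into A v"]) (auto simp: I_def f_inv_into_f)
  ultimately show ?thesis
    using B that by auto
qed

lemma exists_coefficients:
  assumes "finite I" "inj_on v I" "\<forall>a\<in>A. w a \<in> span (v ` I)"
  obtains c where "\<forall>a\<in>A. w a = (\<Sum>i\<in>I. scale (c a i) (v i))"
proof -
  have "\<exists>c. w a = (\<Sum>i\<in>I. scale (c i) (v i))" if a: "a \<in> A" for a
  proof -
    obtain c where "w a = (\<Sum>y\<in>v ` I. scale (c y) y)"
      using assms(1,3) span_finite[of "v ` I"] a by auto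
    then show ?thesis
      using sum.reindex[OF assms(2), of "\<lambda>y. scale (c y) y"] by (auto simp: comp_def)
  qed
  then show ?thesis
    using that by (metis bchoice)
qed

lemma sum_scale_restrict:
  fixes v :: "nat \<Rightarrow> 'b"
  assumes "I \<subseteq> {..<m}"
  shows "(\<Sum>b<m. scale (if b \<in> I then c b else 0) (v b)) = (\<Sum>i\<in>I. scale (c i) (v i))"
proof -
  have "(\<Sum>b<m. scale (if b \<in> I then c b else 0) (v b)) = (\<Sum>b<m. if b \<in> I then scale (c b) (v b) else 0)"
    by (intro sum.cong) auto
  also have "\<dots> = (\<Sum>i\<in>{..<m} \<inter> I. scale (c i) (v i))"
    by (rule sum.inter_restrict[symmetric]) simp
  finally show ?thesis
    using assms by (simp add: Int_absorb1 Int_absorb2)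
qed

lemma lincomb_reduction_matrix:
  assumes "I \<subseteq> {..<m}" "a < m" "\<forall>a\<in>{r..<m}. f a < m"
    and cv: "\<forall>b\<in>{..<m}. v b = (\<Sum>i\<in>I. scale (cv b i) (v i))"
    and cu: "\<forall>a\<in>{..<r}. u a = (\<Sum>i\<in>I. scale (cu a i) (v i))"
  shows "(\<Sum>b<m. scale (reduction_matrix r f I cu cv a b) (v b)) = (if a < r then u a else 0)"
proof (cases "a < r")
  case True
  then show ?thesis
    using sum_scale_restrict[OF assms(1), of "cu a"] cu by (simp add: reduction_matrix_def)
next
  case False
  then have "f a < m" using assms(2,3) by simp
  have "(\<Sum>b<m. scale (if b = f a then 1 else 0) (v b)) = (\<Sum>b<m. if b = f a then v b else 0)"
    by (intro sum.cong) auto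
  also have "\<dots> = v (f a)"
    using \<open>f a < m\<close> by simp
  also have "\<dots> = (\<Sum>b<m. scale (if b \<in> I then cv (f a) b else 0) (v b))"
    unfolding sum_scale_restrict[OF assms(1)] using cv \<open>f a < m\<close> by (metis lessThan_iff)
  finally have "(\<Sum>b<m. scale (if b = f a then 1 else 0) (v b))
      = (\<Sum>b<m. scale (if b \<in> I then cv (f a) b else 0) (v b))" .
  then show ?thesis
    using False by (simp add: reduction_matrix_def scale_left_diff_distrib sum_subtractf)
qed

lemma rows_independent_reduction_matrix:
  assumes "r \<le> m" "bij_betw f {r..<m} ({..<m} - I)"
    and rows: "\<forall>a<r. (\<Sum>b<m. scale (reduction_matrix r f I cu cv a b) (v b)) = u a"
    and u: "inj_on u {..<r}" "independent (u ` {..<r})"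
  shows "rows_independent m (reduction_matrix r f I cu cv)"
proof (rule rows_independent_if_unit_columns[OF assms(1)])
  let ?g = "reduction_matrix r f I cu cv"
  show "\<forall>a'\<in>{r..<m}. f a' < m \<and> (\<forall>a<m. ?g a (f a') = (if a = a' then 1 else 0))"
  proof
    fix a' assume a': "a' \<in> {r..<m}"
    then have fa': "f a' \<notin> I" "f a' < m"
      using assms(2) by (auto simp: bij_betw_def)
    have "?g a (f a') = (if a = a' then 1 else 0)" if "a < m" for a
      using assms(2) fa' a' that by (auto simp: reduction_matrix_def bij_betw_def inj_on_def)
    with fa' show "f a' < m \<and> (\<forall>a<m. ?g a (f a') = (if a = a' then 1 else 0))"
      by blast
  qed
  show "\<forall>x. (\<forall>b<m. (\<Sum>a<r. x a * ?g a b) = 0) \<longrightarrow> (\<forall>a<r. x a = 0)"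
  proof (intro allI impI)
    fix x c assume x: "\<forall>b<m. (\<Sum>a<r. x a * ?g a b) = 0" and "c < r"
    have "(\<Sum>a<r. scale (x a) (u a)) = (\<Sum>a<r. scale (x a) (\<Sum>b<m. scale (?g a b) (v b)))"
      using rows by simp
    also have "\<dots> = (\<Sum>b<m. scale (\<Sum>a<r. x a * ?g a b) (v b))"
      by (simp add: scale_sum_right scale_sum_left scale_scale) (rule sum.swap)
    also have "\<dots> = 0"
      using x by simp
    finally show "x c = 0"
      using scalars_zero_if_independent_image[OF u] \<open>c < r\<close> by blast
  qed
qed

lemma row_reduction:
  fixes v u :: "nat \<Rightarrow> 'b"
  assumes dim: "dim (v ` {..<m}) = r"
    and u: "inj_on u {..<r}" "independent (u ` {..<r})" "u ` {..<r} \<subseteq> span (v ` {..<m})"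
  shows "\<exists>g. rows_independent m g \<and>
           (\<forall>a<m. (\<Sum>b<m. scale (g a b) (v b)) = (if a < r then u a else 0))"
proof -
  obtain I where I: "I \<subseteq> {..<m}" "inj_on v I" "independent (v ` I)" "v ` {..<m} \<subseteq> span (v ` I)"
    by (rule exists_independent_subfamily)
  have "finite I" using I(1) finite_subset by blast
  have "card I = r"
    using basis_card_eq_dim[of "v ` I" "v ` {..<m}"] I dim by (simp add: image_mono card_image)
  then have "r \<le> m" using card_mono[OF _ I(1)] by simp
  have "\<forall>b\<in>{..<m}. v b \<in> span (v ` I)"
    using I(4) by blast
  then obtain cv where cv: "\<forall>b\<in>{..<m}. v b = (\<Sum>i\<in>I. scale (cv b i) (v i))"
    by (rule exists_coefficients[OF \<open>finite I\<close> I(2)])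
  have "\<forall>a\<in>{..<r}. u a \<in> span (v ` I)"
    using u(3) I(4) span_minimal subspace_span by blast
  then obtain cu where cu: "\<forall>a\<in>{..<r}. u a = (\<Sum>i\<in>I. scale (cu a i) (v i))"
    by (rule exists_coefficients[OF \<open>finite I\<close> I(2)])
  have "card {r..<m} = card ({..<m} - I)"
    using \<open>card I = r\<close> I(1) \<open>finite I\<close> by (simp add: card_Diff_subset)
  then obtain f where f: "bij_betw f {r..<m} ({..<m} - I)"
    using finite_same_card_bij by blast
  then have "\<forall>a\<in>{r..<m}. f a < m"
    by (auto simp: bij_betw_def)
  then have rows: "(\<Sum>b<m. scale (reduction_matrix r f I cu cv a b) (v b)) = (if a < r then u a else 0)"
    if "a < m" for a
    using lincomb_reduction_matrix[OF I(1) that _ cv cu] by blast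
  moreover have "rows_independent m (reduction_matrix r f I cu cv)"
    using rows \<open>r \<le> m\<close>
    by (intro rows_independent_reduction_matrix[where v = v, OF \<open>r \<le> m\<close> f _ u(1,2)]) auto
  ultimately show ?thesis by blast
qed

lemma row_reduction_zero_rows:
  fixes v :: "nat \<Rightarrow> 'b"
  assumes "dim (v ` {..<m}) = r"
  shows "\<exists>g. rows_independent m g \<and> (\<forall>a<m. r \<le> a \<longrightarrow> (\<Sum>b<m. scale (g a b) (v b)) = 0)"
proof -
  obtain B where B: "B \<subseteq> v ` {..<m}" "independent B" "v ` {..<m} \<subseteq> span B" "card B = r"
    using basis_exists[of "v ` {..<m}"] assms by metis
  have "finite B" using B(1) finite_surj by blast
  then obtain u where u: "bij_betw u {..<r} B"
    using ex_bij_betw_nat_finite[of B] B(4) by (auto simp: atLeast0LessThan)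
  then have "inj_on u {..<r}" "independent (u ` {..<r})" "u ` {..<r} \<subseteq> span (v ` {..<m})"
    using B(1,2) span_superset[of "v ` {..<m}"] by (auto simp: bij_betw_def)
  then obtain g where "rows_independent m g"
    "\<forall>a<m. (\<Sum>b<m. scale (g a b) (v b)) = (if a < r then u a else 0)"
    using row_reduction[OF assms] by blast
  then show ?thesis by auto
qed

lemma dim_le_dim_if_subset_span:
  assumes "V \<subseteq> span W" "finite W"
  shows "dim V \<le> dim W"
proof -
  obtain B where B: "B \<subseteq> W" "independent B" "W \<subseteq> span B" "card B = dim W"
    by (rule basis_exists)
  have "V \<subseteq> span B"
    using assms(1) B(3) span_minimal subspace_span by blast
  then show ?thesis
    using B(1,4) assms(2) dim_le_card finite_subset by metis
qed

lemma span_eq_range_lincomb: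
  fixes v :: "nat \<Rightarrow> 'b"
  shows "span (v ` {..<m}) = (\<lambda>x. \<Sum>a<m. scale (x a) (v a)) ` {x. \<forall>a\<ge>m. x a = 0}"
proof
  show "(\<lambda>x. \<Sum>a<m. scale (x a) (v a)) ` {x. \<forall>a\<ge>m. x a = 0} \<subseteq> span (v ` {..<m})"
    by (intro image_subsetI span_sum span_scale span_base) auto
  show "span (v ` {..<m}) \<subseteq> (\<lambda>x. \<Sum>a<m. scale (x a) (v a)) ` {x. \<forall>a\<ge>m. x a = 0}"
  proof
    fix y assume "y \<in> span (v ` {..<m})"
    then show "y \<in> (\<lambda>x. \<Sum>a<m. scale (x a) (v a)) ` {x. \<forall>a\<ge>m. x a = 0}"
    proof (induction rule: span_induct_alt)
      case base
      show ?case by (rule image_eqI[of _ _ "\<lambda>_. 0"]) auto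
    next
      case (step c w y)
      then obtain a x where a: "a < m" "w = v a" and x: "\<forall>b\<ge>m. x b = 0" "y = (\<Sum>b<m. scale (x b) (v b))"
        by auto
      have "(\<Sum>b<m. scale (if b = a then c else 0) (v b)) = (\<Sum>b<m. if b = a then scale c (v a) else 0)"
        by (intro sum.cong) auto
      also have "\<dots> = scale c w"
        using a by simp
      finally have "(\<Sum>b<m. scale (x b + (if b = a then c else 0)) (v b)) = scale c w + y"
        using x(2) by (simp add: scale_left_distrib sum.distrib add.commute)
      moreover have "\<forall>b\<ge>m. x b + (if b = a then c else 0) = 0"
        using x(1) a(1) by simp
      ultimately show ?case
        by (intro image_eqI[of _ _ "\<lambda>b. x b + (if b = a then c else 0)"]) auto
    qed
  qed
qed

end

lemma (in vector_space_pair) dim_image_le_finite: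
  assumes "Vector_Spaces.linear s1 s2 f" "finite X"
  shows "vs2.dim (f ` X) \<le> vs1.dim X"
proof -
  obtain B where B: "B \<subseteq> X" "vs1.independent B" "X \<subseteq> vs1.span B" "card B = vs1.dim X"
    by (rule vs1.basis_exists)
  have "finite B" using B(1) assms(2) finite_subset by blast
  have "vs2.dim (f ` X) \<le> card (f ` B)"
    using linear_spans_image[OF assms(1) B(3)] \<open>finite B\<close> by (intro vs2.dim_le_card) auto
  also have "\<dots> \<le> card B"
    using \<open>finite B\<close> by (rule card_image_le)
  finally show ?thesis using B(4) by simp
qed

definition id_mat :: "nat \<Rightarrow> nat \<Rightarrow> 'a::{zero,one}" where
  "id_mat a b = (if a = b then 1 else 0)"

definition mat_mult :: "nat \<Rightarrow> (nat \<Rightarrow> nat \<Rightarrow> 'a::semiring_0) \<Rightarrow> (nat \<Rightarrow> nat \<Rightarrow> 'a) \<Rightarrow> nat \<Rightarrow> nat \<Rightarrow> 'a" where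
  "mat_mult m A B = (\<lambda>a c. \<Sum>b<m. A a b * B b c)"

lemma invertible_id_mat: "Defs.invertible_mat m id_mat"
  unfolding Defs.invertible_mat_def
  by (intro exI[of _ id_mat]) (simp add: id_mat_def if_distrib[of "\<lambda>x. x * _"] cong: if_cong)

lemma sum_id_mat_left: "(\<Sum>b<m. id_mat a b * f b) = (if a < m then f a else (0::'a::semiring_1))"
proof -
  have "(\<Sum>b<m. id_mat a b * f b) = (\<Sum>b<m. if a = b then f b else 0)"
    by (intro sum.cong) (auto simp: id_mat_def)
  then show ?thesis by simp
qed

lemma invertible_mat_mult:
  assumes "Defs.invertible_mat m A" "Defs.invertible_mat m B"
  shows "Defs.invertible_mat m (mat_mult m A B)"
  unfolding invertible_mat_iff_rows_independent rows_independent_def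
proof (intro allI impI)
  fix x a assume x: "\<forall>c<m. (\<Sum>a<m. x a * mat_mult m A B a c) = 0" and "a < m"
  define y where "y b = (\<Sum>a<m. x a * A a b)" for b
  have "(\<Sum>b<m. y b * B b c) = (\<Sum>a<m. x a * mat_mult m A B a c)" for c
    unfolding y_def mat_mult_def
    by (simp add: sum_distrib_left sum_distrib_right mult.assoc) (rule sum.swap)
  then have "\<forall>b<m. y b = 0"
    using x assms(2) by (simp add: invertible_mat_iff_rows_independent rows_independent_def)
  then show "x a = 0"
    using assms(1) \<open>a < m\<close> by (simp add: invertible_mat_iff_rows_independent rows_independent_def y_def)
qed

lemma invertible_mat_left_inverse:
  assumes "Defs.invertible_mat m A"
  obtains B where "Defs.invertible_mat m B" "\<forall>a<m. \<forall>c<m. mat_mult m B A a c = id_mat a c"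
proof -
  obtain B where B: "\<forall>a<m. \<forall>b<m. (\<Sum>c<m. A a c * B c b) = (if a = b then 1 else 0)"
    "\<forall>a<m. \<forall>b<m. (\<Sum>c<m. B a c * A c b) = (if a = b then 1 else 0)"
    using assms unfolding Defs.invertible_mat_def by blast
  then have "Defs.invertible_mat m B"
    unfolding Defs.invertible_mat_def by blast
  moreover have "\<forall>a<m. \<forall>c<m. mat_mult m B A a c = id_mat a c"
    using B(2) by (simp add: mat_mult_def id_mat_def)
  ultimately show ?thesis by (rule that)
qed

lemma id_mat_in_GL_prod: "(\<lambda>i. id_mat) \<in> GL_prod d n"
  by (simp add: GL_prod_def invertible_id_mat)

lemma GL_prod_upd: "g \<in> GL_prod d n \<Longrightarrow> Defs.invertible_mat (n j) A \<Longrightarrow> g(j := A) \<in> GL_prod d n"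
  by (simp add: GL_prod_def)

lemma GL_prod_mult:
  "g \<in> GL_prod d n \<Longrightarrow> h \<in> GL_prod d n \<Longrightarrow> (\<lambda>i. mat_mult (n i) (g i) (h i)) \<in> GL_prod d n"
  by (simp add: GL_prod_def invertible_mat_mult)

lemma idx_0: "idx 0 n = {\<lambda>i. 0}"
  by (auto simp: idx_def)

lemma idx_Suc_bij: "bij_betw (\<lambda>(l, b). l(d := b)) (idx d n \<times> {..<n d}) (idx (Suc d) n)"
  by (rule bij_betwI[where g = "\<lambda>k. (k(d := 0), k d)"]) (auto simp: idx_def less_Suc_eq fun_eq_iff)

lemma finite_idx: "finite (idx d n)"
  by (induct d) (simp_all add: idx_0 bij_betw_finite[OF idx_Suc_bij, symmetric])

lemma card_idx: "card (idx d n) = (\<Prod>i<d. n i)"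
  by (induct d) (simp_all add: idx_0 bij_betw_same_card[OF idx_Suc_bij, symmetric] card_cartesian_product)

lemma sum_idx_prod:
  "(\<Sum>l\<in>idx d n. \<Prod>i<d. f i (l i)) = (\<Prod>i<d. \<Sum>b<n i. f i b :: 'a::comm_semiring_1)"
proof (induct d)
  case 0
  then show ?case by (simp add: idx_0)
next
  case (Suc d)
  have "(\<Sum>k\<in>idx (Suc d) n. \<Prod>i<Suc d. f i (k i))
      = (\<Sum>(l, b)\<in>idx d n \<times> {..<n d}. \<Prod>i<Suc d. f i ((l(d := b)) i))"
    using sum.reindex_bij_betw[OF idx_Suc_bij, of "\<lambda>k. \<Prod>i<Suc d. f i (k i)" d n]
    by (simp add: case_prod_unfold)
  also have "\<dots> = (\<Sum>(l, b)\<in>idx d n \<times> {..<n d}. (\<Prod>i<d. f i (l i)) * f d b)"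
    by (intro sum.cong refl) (auto intro!: prod.cong)
  also have "\<dots> = (\<Sum>l\<in>idx d n. \<Sum>b<n d. (\<Prod>i<d. f i (l i)) * f d b)"
    by (rule sum.cartesian_product[symmetric])
  also have "\<dots> = (\<Sum>l\<in>idx d n. \<Prod>i<d. f i (l i)) * (\<Sum>b<n d. f d b)"
    by (rule sum_product[symmetric])
  finally show ?case using Suc by simp
qed

lemma sum_idx_split:
  assumes "j < d"
  shows "(\<Sum>l\<in>idx d n. F l) = (\<Sum>b<n j. \<Sum>l\<in>{l \<in> idx d n. l j = 0}. F (l(j := b)))"
proof -
  have "k(j := 0) \<in> idx d n" if "k \<in> idx d n" for k
    using that assms by (auto simp: idx_def intro: le_less_trans[OF le0])
  then have "bij_betw (\<lambda>(l, b). l(j := b)) ({l \<in> idx d n. l j = 0} \<times> {..<n j}) (idx d n)"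
    using assms by (intro bij_betwI[where g = "\<lambda>k. (k(j := 0), k j)"]) (auto simp: idx_def)
  from sum.reindex_bij_betw[OF this, of F, symmetric]
  have "(\<Sum>l\<in>idx d n. F l) = (\<Sum>(l, b)\<in>{l \<in> idx d n. l j = 0} \<times> {..<n j}. F (l(j := b)))"
    by (simp add: case_prod_unfold)
  also have "\<dots> = (\<Sum>l\<in>{l \<in> idx d n. l j = 0}. \<Sum>b<n j. F (l(j := b)))"
    by (rule sum.cartesian_product[symmetric])
  finally show ?thesis
    by (simp only: sum.swap[of _ "{l \<in> idx d n. l j = 0}"])
qed

lemma idx_eqI: "k \<in> idx d n \<Longrightarrow> l \<in> idx d n \<Longrightarrow> (\<forall>i<d. k i = l i) \<Longrightarrow> k = l"
  by (auto simp: idx_def fun_eq_iff) (metis not_less)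

lemma idx_upd:
  assumes "j < d" "a < n j"
  shows "k(j := a) \<in> idx d n \<longleftrightarrow> (\<forall>i\<in>{..<d} - {j}. k i < n i) \<and> (\<forall>i\<ge>d. k i = 0)"
  using assms by (auto simp: idx_def)

lemma sum_fun_apply: "(sum F A) k = (\<Sum>a\<in>A. F a k)"
  by (induct A rule: infinite_finite_induct) auto

lemma rscale_apply [simp]: "rscale c f k = c * f k"
  by (simp add: rscale_def)

interpretation TV: vector_space rscale
  by unfold_locales (auto simp: rscale_def fun_eq_iff algebra_simps)

interpretation TV_pair: vector_space_pair rscale rscale ..

lemma linear_act: "Vector_Spaces.linear rscale rscale (act d n g)"
  unfolding Vector_Spaces.linear_iff
  by (auto simp: TV.vector_space_axioms act_def fun_eq_iff algebra_simps sum.distrib sum_distrib_left)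

lemma act_in_tensors: "act d n g S \<in> tensors d n"
  by (simp add: act_def tensors_def)

lemma act_cong:
  assumes "\<forall>i<d. \<forall>a<n i. \<forall>c<n i. g i a c = h i a c"
  shows "act d n g S = act d n h S"
  using assms by (auto simp: act_def idx_def fun_eq_iff intro!: sum.cong prod.cong)

lemma act_id_mat: "act d n (\<lambda>i. id_mat) S = (\<lambda>k. if k \<in> idx d n then S k else 0)"
proof
  fix k
  have "(\<Prod>i<d. id_mat (k i) (l i)) = (if k = l then 1 else (0::real))"
    if kl: "k \<in> idx d n" "l \<in> idx d n" for l :: "nat \<Rightarrow> nat"
  proof (cases "k = l")
    case False
    then obtain i where "i < d" "k i \<noteq> l i"
      using kl idx_eqI by blast
    then have "(\<Prod>i<d. id_mat (k i) (l i)) = (0::real)"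
      by (intro prod_zero bexI[of _ i]) (auto simp: id_mat_def)
    with False show ?thesis by simp
  qed (simp add: id_mat_def)
  then show "act d n (\<lambda>i. id_mat) S k = (if k \<in> idx d n then S k else 0)"
    by (simp add: act_def if_distrib[of "\<lambda>x. x * _"] finite_idx cong: if_cong)
qed

lemma act_id_mat_tensor: "S \<in> tensors d n \<Longrightarrow> act d n (\<lambda>i. id_mat) S = S"
  by (auto simp: act_id_mat tensors_def)

lemma act_mat_mult: "act d n g (act d n h S) = act d n (\<lambda>i. mat_mult (n i) (g i) (h i)) S"
proof
  fix k
  have "(\<Sum>l\<in>idx d n. (\<Prod>i<d. g i (k i) (l i)) * (\<Sum>p\<in>idx d n. (\<Prod>i<d. h i (l i) (p i)) * S p))
      = (\<Sum>p\<in>idx d n. (\<Sum>l\<in>idx d n. \<Prod>i<d. g i (k i) (l i) * h i (l i) (p i)) * S p)"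
    by (simp add: sum_distrib_left sum_distrib_right prod.distrib mult.assoc) (rule sum.swap)
  also have "\<dots> = (\<Sum>p\<in>idx d n. (\<Prod>i<d. mat_mult (n i) (g i) (h i) (k i) (p i)) * S p)"
    by (intro sum.cong refl) (simp add: sum_idx_prod[of "\<lambda>i b. g i (k i) b * h i b (_ i)"] mat_mult_def)
  finally show "act d n g (act d n h S) k = act d n (\<lambda>i. mat_mult (n i) (g i) (h i)) S k"
    by (simp add: act_def cong: sum.cong)
qed

lemma GL_prod_inverse:
  assumes "g \<in> GL_prod d n"
  obtains h where "h \<in> GL_prod d n" "\<forall>S\<in>tensors d n. act d n h (act d n g S) = S"
proof -
  have "\<exists>B. Defs.invertible_mat (n i) B \<and> (\<forall>a<n i. \<forall>c<n i. mat_mult (n i) B (g i) a c = id_mat a c)"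
    if "i < d" for i
  proof -
    have "Defs.invertible_mat (n i) (g i)"
      using assms that by (simp add: GL_prod_def)
    then obtain B where "Defs.invertible_mat (n i) B" "\<forall>a<n i. \<forall>c<n i. mat_mult (n i) B (g i) a c = id_mat a c"
      by (rule invertible_mat_left_inverse)
    then show ?thesis by blast
  qed
  then obtain h where h: "\<forall>i<d. Defs.invertible_mat (n i) (h i) \<and>
      (\<forall>a<n i. \<forall>c<n i. mat_mult (n i) (h i) (g i) a c = id_mat a c)"
    by metis
  have "act d n h (act d n g S) = S" if "S \<in> tensors d n" for S
  proof -
    have "act d n h (act d n g S) = act d n (\<lambda>i. mat_mult (n i) (h i) (g i)) S"
      by (rule act_mat_mult)
    also have "\<dots> = act d n (\<lambda>i. id_mat) S"
      using h by (intro act_cong) auto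
    finally show ?thesis
      using act_id_mat_tensor[OF that] by simp
  qed
  moreover have "h \<in> GL_prod d n"
    using h by (simp add: GL_prod_def)
  ultimately show ?thesis using that by blast
qed

definition slice :: "tensor \<Rightarrow> nat \<Rightarrow> nat \<Rightarrow> tensor" where
  "slice S j a = (\<lambda>k. if k j = 0 then S (k(j := a)) else 0)"

lemma slice_apply_upd: "slice S j (k j) (k(j := 0)) = S k"
  by (simp add: slice_def)

lemma flatten_eq_sum_slices: "flatten d n S j x = (\<Sum>a<n j. rscale (x a) (slice S j a))"
  by (auto simp: fun_eq_iff flatten_def slice_def sum_fun_apply)

lemma mrank_eq_dim_slices: "mrank d n S j = TV.dim (slice S j ` {..<n j})"
  unfolding mrank_def flatten_eq_sum_slices TV.span_eq_range_lincomb[symmetric] TV.dim_span ..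

lemma act_apply_split:
  assumes "j < d" "k \<in> idx d n"
  shows "act d n g S k = (\<Sum>l\<in>{l \<in> idx d n. l j = 0}.
           (\<Prod>i\<in>{..<d} - {j}. g i (k i) (l i)) * (\<Sum>b<n j. g j (k j) b * S (l(j := b))))"
proof -
  have "act d n g S k = (\<Sum>b<n j. \<Sum>l\<in>{l \<in> idx d n. l j = 0}. (\<Prod>i<d. g i (k i) ((l(j := b)) i)) * S (l(j := b)))"
    using assms by (simp add: act_def sum_idx_split[OF assms(1)])
  also have "\<dots> = (\<Sum>b<n j. \<Sum>l\<in>{l \<in> idx d n. l j = 0}.
      (\<Prod>i\<in>{..<d} - {j}. g i (k i) (l i)) * (g j (k j) b * S (l(j := b))))"
  proof (intro sum.cong refl)
    fix b l
    have "(\<Prod>i<d. g i (k i) ((l(j := b)) i)) = g j (k j) b * (\<Prod>i\<in>{..<d} - {j}. g i (k i) ((l(j := b)) i))"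
      using assms(1) by (subst prod.remove[of _ j]) auto
    also have "(\<Prod>i\<in>{..<d} - {j}. g i (k i) ((l(j := b)) i)) = (\<Prod>i\<in>{..<d} - {j}. g i (k i) (l i))"
      by (intro prod.cong) auto
    finally show "(\<Prod>i<d. g i (k i) ((l(j := b)) i)) * S (l(j := b))
        = (\<Prod>i\<in>{..<d} - {j}. g i (k i) (l i)) * (g j (k j) b * S (l(j := b)))"
      by simp
  qed
  also have "\<dots> = (\<Sum>l\<in>{l \<in> idx d n. l j = 0}.
      (\<Prod>i\<in>{..<d} - {j}. g i (k i) (l i)) * (\<Sum>b<n j. g j (k j) b * S (l(j := b))))"
    by (subst sum.swap) (simp add: sum_distrib_left)
  finally show ?thesis .
qed

lemma slice_act:
  assumes "j < d" "a < n j"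
  shows "slice (act d n g S) j a = act d n (g(j := id_mat)) (\<Sum>b<n j. rscale (g j a b) (slice S j b))"
proof
  fix k
  define F where "F = (\<Sum>b<n j. rscale (g j a b) (slice S j b))"
  have F: "F l = (if l j = 0 then (\<Sum>b<n j. g j a b * S (l(j := b))) else 0)" for l
    by (simp add: F_def sum_fun_apply slice_def)
  let ?P = "\<lambda>k l. \<Prod>i\<in>{..<d} - {j}. g i (k i) (l i)"
  have idx_a: "k(j := a) \<in> idx d n \<longleftrightarrow> k \<in> idx d n" if "k j = 0" for k
    using idx_upd[of j d a n k] idx_upd[of j d 0 n k] assms that by (simp add: fun_upd_idem)
  have act_F: "act d n (g(j := id_mat)) F k = (\<Sum>l\<in>{l \<in> idx d n. l j = 0}. ?P k l * F (l(j := k j)))"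
    if "k \<in> idx d n" for k
    unfolding act_apply_split[OF assms(1) that] using that assms(1)
    by (intro sum.cong refl arg_cong2[where f = "(*)"] prod.cong) (auto simp: sum_id_mat_left idx_def)
  show "slice (act d n g S) j a k = act d n (g(j := id_mat)) F k"
  proof (cases "k j = 0")
    case False
    then show ?thesis
      by (cases "k \<in> idx d n") (simp_all add: slice_def act_F F, simp add: act_def)
  next
    case True
    show ?thesis
    proof (cases "k \<in> idx d n")
      case False
      then have "k(j := a) \<notin> idx d n"
        using True idx_a by blast
      then show ?thesis using True False by (simp add: slice_def act_def)
    next
      case k: True
      then have "k(j := a) \<in> idx d n"
        using True idx_a by blast
      then have "slice (act d n g S) j a k = (\<Sum>l\<in>{l \<in> idx d n. l j = 0}.
          (\<Prod>i\<in>{..<d} - {j}. g i ((k(j := a)) i) (l i)) * (\<Sum>b<n j. g j a b * S (l(j := b))))"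
        using True act_apply_split[OF assms(1)] by (simp add: slice_def)
      also have "\<dots> = (\<Sum>l\<in>{l \<in> idx d n. l j = 0}. ?P k l * (\<Sum>b<n j. g j a b * S (l(j := b))))"
        by (intro sum.cong refl arg_cong2[where f = "(*)"] prod.cong) auto
      also have "\<dots> = act d n (g(j := id_mat)) F k"
        using True by (simp add: act_F[OF k] F cong: sum.cong)
      finally show ?thesis .
    qed
  qed
qed

lemma act_single_mode:
  assumes "j < d" "k \<in> idx d n"
  shows "act d n ((\<lambda>i. id_mat)(j := A)) S k = (\<Sum>b<n j. A (k j) b * S (k(j := b)))"
proof -
  have "k j < n j" "k(j := 0) \<in> idx d n"
    using assms by (auto simp: idx_def)
  have "act d n ((\<lambda>i. id_mat)(j := A)) S k = slice (act d n ((\<lambda>i. id_mat)(j := A)) S) j (k j) (k(j := 0))"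
    by (simp add: slice_apply_upd)
  also have "\<dots> = act d n (\<lambda>i. id_mat) (\<Sum>b<n j. rscale (A (k j) b) (slice S j b)) (k(j := 0))"
    using slice_act[of j d "k j" n "(\<lambda>i. id_mat)(j := A)" S] assms(1) \<open>k j < n j\<close>
    by (simp add: fun_upd_idem)
  also have "\<dots> = (\<Sum>b<n j. A (k j) b * S (k(j := b)))"
    using \<open>k(j := 0) \<in> idx d n\<close> by (simp add: act_id_mat sum_fun_apply slice_def)
  finally show ?thesis .
qed

lemma mrank_act_le:
  assumes "j < d"
  shows "mrank d n (act d n g S) j \<le> mrank d n S j"
proof -
  let ?f = "act d n (g(j := id_mat))"
  have "slice (act d n g S) j ` {..<n j} \<subseteq> ?f ` TV.span (slice S j ` {..<n j})"
  proof
    fix F assume "F \<in> slice (act d n g S) j ` {..<n j}"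
    then obtain a where "a < n j" "F = ?f (\<Sum>b<n j. rscale (g j a b) (slice S j b))"
      using slice_act[OF assms] by blast
    moreover have "(\<Sum>b<n j. rscale (g j a b) (slice S j b)) \<in> TV.span (slice S j ` {..<n j})"
      by (intro TV.span_sum TV.span_scale TV.span_base) auto
    ultimately show "F \<in> ?f ` TV.span (slice S j ` {..<n j})" by blast
  qed
  also have "\<dots> = TV.span (?f ` slice S j ` {..<n j})"
    by (rule TV_pair.linear_span_image[OF linear_act, symmetric])
  finally have "TV.dim (slice (act d n g S) j ` {..<n j}) \<le> TV.dim (?f ` slice S j ` {..<n j})"
    by (rule TV.dim_le_dim_if_subset_span) simp
  also have "\<dots> \<le> TV.dim (slice S j ` {..<n j})"
    by (rule TV_pair.dim_image_le_finite[OF linear_act]) simp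
  finally show ?thesis
    by (simp add: mrank_eq_dim_slices)
qed

lemma mrank_act:
  assumes "g \<in> GL_prod d n" "S \<in> tensors d n" "j < d"
  shows "mrank d n (act d n g S) j = mrank d n S j"
proof -
  obtain h where "\<forall>S\<in>tensors d n. act d n h (act d n g S) = S"
    using GL_prod_inverse[OF assms(1)] by blast
  then have "mrank d n S j \<le> mrank d n (act d n g S) j"
    using mrank_act_le[OF assms(3), of n h "act d n g S"] assms(2) by simp
  with mrank_act_le[OF assms(3)] show ?thesis by (simp add: le_antisym)
qed

lemma act_in_Lambda: "g \<in> GL_prod d n \<Longrightarrow> S \<in> Lambda d n t \<Longrightarrow> act d n g S \<in> Lambda d n t"
  by (simp add: Lambda_def act_in_tensors mrank_act)

lemma iota_cong: "(\<forall>i\<in>{1..<d}. k i = k' i) \<Longrightarrow> iota d t k = iota d t k'"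
  unfolding iota_def by (intro sum.cong refl) auto

lemma iota_Suc:
  assumes "0 < d"
  shows "iota (Suc d) t k = iota d t k * t d + k d"
proof -
  have "{1..<Suc d} = insert d {1..<d}" "{d<..<Suc d} = {}" using assms by auto
  moreover have "(\<Prod>j\<in>{i<..<Suc d}. t j) = (\<Prod>j\<in>{i<..<d}. t j) * t d" if "i < d" for i
  proof -
    have "{i<..<Suc d} = insert d {i<..<d}" using that by auto
    then show ?thesis by (simp add: mult.commute)
  qed
  ultimately show ?thesis
    by (simp add: iota_def sum_distrib_right mult.assoc)
qed

lemma mixed_radix_less: "(x::nat) < P \<Longrightarrow> y < T \<Longrightarrow> x * T + y < P * T"
proof -
  assume "x < P" "y < T"
  then have "x * T + y < Suc x * T" by simp
  also have "\<dots> \<le> P * T" using \<open>x < P\<close> by (intro mult_le_mono1) simp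
  finally show ?thesis .
qed

lemma iota_less:
  assumes "0 < d" "\<forall>i\<in>{1..<d}. k i < t i"
  shows "iota d t k < (\<Prod>i\<in>{1..<d}. t i)"
  using assms
proof (induction d rule: nat_induct_non_zero)
  case 1
  then show ?case by (simp add: iota_def)
next
  case (Suc d)
  have "iota (Suc d) t k = iota d t k * t d + k d"
    by (rule iota_Suc[OF Suc.hyps(1)])
  also have "\<dots> < (\<Prod>i\<in>{1..<d}. t i) * t d"
    using Suc by (intro mixed_radix_less) auto
  also have "\<dots> = (\<Prod>i\<in>{1..<Suc d}. t i)"
    using Suc.hyps(1) by (simp add: atLeastLessThanSuc mult.commute)
  finally show ?case .
qed

lemma iota_inj:
  assumes "0 < d" "\<forall>i\<in>{1..<d}. k i < t i" "\<forall>i\<in>{1..<d}. k' i < t i" "iota d t k = iota d t k'"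
  shows "\<forall>i\<in>{1..<d}. k i = k' i"
  using assms
proof (induction d rule: nat_induct_non_zero)
  case 1
  then show ?case by simp
next
  case (Suc d)
  then have less: "k d < t d" "k' d < t d" by auto
  have eq: "iota d t k * t d + k d = iota d t k' * t d + k' d"
    using Suc.prems(3) by (simp add: iota_Suc[OF Suc.hyps(1)])
  have "k d = k' d"
    using arg_cong[OF eq, of "\<lambda>x. x mod t d"] less by simp
  moreover have "iota d t k = iota d t k'"
    using arg_cong[OF eq, of "\<lambda>x. x div t d"] less by simp
  then have "\<forall>i\<in>{1..<d}. k i = k' i"
    using Suc.prems(1,2) by (intro Suc.IH) auto
  ultimately show ?case
    by (auto simp: less_Suc_eq)
qed

lemma bij_betw_iota:
  assumes "0 < d"
  shows "bij_betw (iota d t) (idx d (t(0 := 1))) {..<\<Prod>i\<in>{1..<d}. t i}"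
proof -
  have box: "\<forall>i\<in>{1..<d}. k i < t i" "k 0 = 0" if "k \<in> idx d (t(0 := 1))" for k
    using that assms by (auto simp: idx_def)
  have "inj_on (iota d t) (idx d (t(0 := 1)))"
  proof (rule inj_onI)
    fix k k' assume k: "k \<in> idx d (t(0 := 1))" and k': "k' \<in> idx d (t(0 := 1))"
      and "iota d t k = iota d t k'"
    then have "\<forall>i\<in>{1..<d}. k i = k' i"
      using iota_inj[OF assms box(1)[OF k] box(1)[OF k']] by blast
    then have "\<forall>i<d. k i = k' i"
      using box(2)[OF k] box(2)[OF k'] by (metis atLeastLessThan_iff less_one not_less)
    then show "k = k'"
      using k k' idx_eqI by blast
  qed
  moreover have "iota d t ` idx d (t(0 := 1)) \<subseteq> {..<\<Prod>i\<in>{1..<d}. t i}"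
    using box iota_less[OF assms] by auto
  moreover have "card (idx d (t(0 := 1))) = card {..<\<Prod>i\<in>{1..<d}. t i}"
  proof -
    have "{..<d} = insert 0 {1..<d}" using assms by auto
    then show ?thesis by (simp add: card_idx)
  qed
  ultimately show ?thesis
    by (simp add: bij_betw_def card_image card_subset_eq)
qed

lemma dual_points_independent:
  fixes w :: "nat \<Rightarrow> tensor"
  assumes "\<forall>a<r. \<forall>b<r. w b (p a) = (if a = b then 1 else 0)"
  shows "inj_on w {..<r}" "TV.independent (w ` {..<r})"
proof -
  show inj: "inj_on w {..<r}"
    using assms by (intro inj_onI) (metis lessThan_iff zero_neq_one)
  show "TV.independent (w ` {..<r})"
  proof (rule TV.independent_if_scalars_zero)
    fix f y assume sum0: "(\<Sum>y\<in>w ` {..<r}. rscale (f y) y) = 0" and "y \<in> w ` {..<r}"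
    then obtain a where "a < r" "y = w a" by auto
    have "0 = (\<Sum>b<r. rscale (f (w b)) (w b)) (p a)"
      using sum0 by (simp add: sum.reindex[OF inj])
    also have "\<dots> = (\<Sum>b<r. f (w b) * w b (p a))"
      by (simp add: sum_fun_apply)
    also have "\<dots> = (\<Sum>b<r. if b = a then f (w a) else 0)"
      using assms \<open>a < r\<close> by (intro sum.cong) auto
    finally have "f (w a) = 0"
      using \<open>a < r\<close> by simp
    with \<open>y = w a\<close> show "f y = 0" by simp
  qed simp
qed

lemma dim_eq_if_dual_points:
  fixes w :: "nat \<Rightarrow> tensor"
  assumes "\<forall>a<r. \<forall>b<r. w b (p a) = (if a = b then 1 else 0)"
    and "\<forall>a. r \<le> a \<and> a < m \<longrightarrow> w a = 0" "r \<le> m"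
  shows "TV.dim (w ` {..<m}) = r"
proof (rule TV.dim_unique[of "w ` {..<r}"])
  show "w ` {..<r} \<subseteq> w ` {..<m}" using assms(3) by auto
  show "w ` {..<m} \<subseteq> TV.span (w ` {..<r})"
  proof
    fix y assume "y \<in> w ` {..<m}"
    then obtain a where "a < m" "y = w a" by auto
    then show "y \<in> TV.span (w ` {..<r})"
      using assms(2) by (cases "a < r") (auto intro: TV.span_base TV.span_zero)
  qed
  show "TV.independent (w ` {..<r})" "card (w ` {..<r}) = r"
    using dual_points_independent[of r w p, OF assms(1)] by (simp_all add: card_image)
qed

context
  fixes d :: nat and n t :: "nat \<Rightarrow> nat"
  assumes d_pos: "0 < d"
    and t_pos_le: "\<forall>i<d. 0 < t i \<and> t i \<le> n i"
    and t_0: "t 0 = (\<Prod>i\<in>{1..<d}. t i)"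
begin

lemma idx_core_iff: "k \<in> idx d (t(0 := 1)) \<longleftrightarrow> k \<in> idx d n \<and> k 0 = 0 \<and> (\<forall>i\<in>{1..<d}. k i < t i)"
proof
  assume k: "k \<in> idx d (t(0 := 1))"
  then have "k 0 = 0" using d_pos by (auto simp: idx_def)
  moreover have "k i < n i" if "i < d" for i
  proof (cases "i = 0")
    case True
    then show ?thesis using \<open>k 0 = 0\<close> t_pos_le that by auto
  next
    case False
    then have "k i < t i" using k that by (auto simp: idx_def)
    then show ?thesis using t_pos_le that by (meson order.strict_trans2)
  qed
  ultimately show "k \<in> idx d n \<and> k 0 = 0 \<and> (\<forall>i\<in>{1..<d}. k i < t i)"
    using k by (auto simp: idx_def)
qed (auto simp: idx_def less_Suc_eq_0_disj)

lemma bij_betw_iota_core: "bij_betw (iota d t) (idx d (t(0 := 1))) {..<t 0}"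
  using bij_betw_iota[OF d_pos] t_0 by simp

lemma iota_core_less:
  assumes "k \<in> idx d (t(0 := 1))"
  shows "iota d t k < n 0"
proof -
  have "iota d t k < t 0"
    using bij_betwE[OF bij_betw_iota_core] assms by blast
  moreover have "t 0 \<le> n 0"
    using t_pos_le d_pos by blast
  ultimately show ?thesis by linarith
qed

lemma slice_normal_tensor_0:
  assumes "a < n 0"
  shows "slice (normal_tensor d n t) 0 a = (\<lambda>k. if k \<in> idx d (t(0 := 1)) \<and> iota d t k = a then 1 else 0)"
proof
  fix k
  show "slice (normal_tensor d n t) 0 a k = (if k \<in> idx d (t(0 := 1)) \<and> iota d t k = a then 1 else 0)"
  proof (cases "k 0 = 0")
    case True
    have "iota d t (k(0 := a)) = iota d t k"
      by (rule iota_cong) simp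
    moreover have "k(0 := a) \<in> idx d n \<longleftrightarrow> k \<in> idx d n"
      using idx_upd[of 0 d a n k] idx_upd[of 0 d 0 n k] d_pos assms True by (simp add: fun_upd_idem)
    ultimately show ?thesis
      using True idx_core_iff[of k] by (auto simp: slice_def normal_tensor_def)
  next
    case False
    then show ?thesis
      using idx_core_iff[of k] by (simp add: slice_def)
  qed
qed

lemma slice_normal_tensor_0_iota:
  assumes "k \<in> idx d (t(0 := 1))"
  shows "slice (normal_tensor d n t) 0 (iota d t k) = (\<lambda>l. if l = k then 1 else 0)"
proof
  fix l
  show "slice (normal_tensor d n t) 0 (iota d t k) l = (if l = k then 1 else 0)"
    using slice_normal_tensor_0[OF iota_core_less[OF assms]] bij_betw_iota_core assms
    by (auto simp: bij_betw_def inj_on_def)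
qed

lemma slice_normal_tensor_0_zero:
  assumes "t 0 \<le> a" "a < n 0"
  shows "slice (normal_tensor d n t) 0 a = 0"
proof -
  have "iota d t k \<noteq> a" if "k \<in> idx d (t(0 := 1))" for k
    using bij_betwE[OF bij_betw_iota_core] that assms(1) by fastforce
  then show ?thesis
    using slice_normal_tensor_0[OF assms(2)] by (auto simp: fun_eq_iff)
qed

lemma slice_normal_tensor_0_dual_points:
  defines "p \<equiv> inv_into (idx d (t(0 := 1))) (iota d t)"
  assumes "a < t 0" "b < t 0"
  shows "slice (normal_tensor d n t) 0 b (p a) = (if a = b then 1 else 0)"
proof -
  have p: "p c \<in> idx d (t(0 := 1))" "iota d t (p c) = c" if "c < t 0" for c
  proof -
    have "c \<in> iota d t ` idx d (t(0 := 1))"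
      using that bij_betw_iota_core by (simp add: bij_betw_def)
    then show "p c \<in> idx d (t(0 := 1))" "iota d t (p c) = c"
      unfolding p_def by (rule inv_into_into, rule f_inv_into_f)
  qed
  have "slice (normal_tensor d n t) 0 b = (\<lambda>l. if l = p b then 1 else 0)"
    using slice_normal_tensor_0_iota[OF p(1)[OF assms(3)]] p(2)[OF assms(3)] by simp
  moreover have "p a = p b \<longleftrightarrow> a = b"
    using p(2)[OF assms(2)] p(2)[OF assms(3)] by metis
  ultimately show ?thesis by simp
qed

lemma mrank_normal_tensor_0: "mrank d n (normal_tensor d n t) 0 = t 0"
proof -
  have "t 0 \<le> n 0"
    using t_pos_le d_pos by blast
  then show ?thesis
    unfolding mrank_eq_dim_slices using slice_normal_tensor_0_dual_points slice_normal_tensor_0_zero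
    by (intro dim_eq_if_dual_points[of "t 0" "slice (normal_tensor d n t) 0"
          "inv_into (idx d (t(0 := 1))) (iota d t)" "n 0"]) auto
qed

lemma mrank_normal_tensor_pos:
  assumes j: "j \<in> {1..<d}"
  shows "mrank d n (normal_tensor d n t) j = t j"
proof -
  define e where "e a = (\<lambda>i. if i = j then a else 0)" for a :: nat
  define q where "q a = (\<lambda>i::nat. if i = 0 then iota d t (e a) else 0)" for a
  have e_box: "e a \<in> idx d (t(0 := 1))" if "a < t j" for a
    using that j t_pos_le by (auto simp: idx_core_iff idx_def e_def)
  have "slice (normal_tensor d n t) j b (q a) = (if a = b then 1 else 0)"
    if "a < t j" "b < t j" for a b
  proof -
    have "(q a)(j := b) \<in> idx d n"
      using j that t_pos_le iota_core_less[OF e_box] by (auto simp: idx_def q_def)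
    moreover have "iota d t ((q a)(j := b)) = iota d t (e b)"
      by (rule iota_cong) (auto simp: q_def e_def)
    moreover have "iota d t (e a) = iota d t (e b) \<longleftrightarrow> a = b"
      using bij_betw_iota_core e_box that unfolding bij_betw_def inj_on_def
      by (metis e_def)
    ultimately show ?thesis
      using j that t_pos_le by (auto simp: slice_def normal_tensor_def q_def)
  qed
  moreover have "slice (normal_tensor d n t) j b = 0" if "t j \<le> b" for b
    using that j by (auto simp: slice_def normal_tensor_def fun_eq_iff)
  ultimately show ?thesis
    unfolding mrank_eq_dim_slices
    by (intro dim_eq_if_dual_points[where p = q]) (use j t_pos_le in auto)
qed

lemma normal_tensor_in_Lambda: "normal_tensor d n t \<in> Lambda d n t"
  unfolding Lambda_def
proof (intro CollectI conjI allI impI)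
  show "normal_tensor d n t \<in> tensors d n"
    by (simp add: tensors_def normal_tensor_def)
  show "mrank d n (normal_tensor d n t) i = t i" if "i < d" for i
    using that by (cases "i = 0") (simp_all add: mrank_normal_tensor_0 mrank_normal_tensor_pos)
qed

lemma in_span_normal_slices:
  assumes "\<forall>k. F k \<noteq> 0 \<longrightarrow> k \<in> idx d (t(0 := 1))"
  shows "F \<in> TV.span (slice (normal_tensor d n t) 0 ` {..<t 0})"
proof -
  have "F = (\<Sum>k\<in>idx d (t(0 := 1)). rscale (F k) (\<lambda>l. if l = k then 1 else 0))"
  proof
    fix l
    have "(\<Sum>k\<in>idx d (t(0 := 1)). rscale (F k) (\<lambda>l. if l = k then 1 else 0)) l
        = (\<Sum>k\<in>idx d (t(0 := 1)). if k = l then F l else 0)"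
      by (simp add: sum_fun_apply) (intro sum.cong refl, auto)
    also have "\<dots> = F l"
      using assms finite_idx by auto
    finally show "F l = (\<Sum>k\<in>idx d (t(0 := 1)). rscale (F k) (\<lambda>l. if l = k then 1 else 0)) l" ..
  qed
  also have "\<dots> \<in> TV.span (slice (normal_tensor d n t) 0 ` {..<t 0})"
  proof (intro TV.span_sum TV.span_scale TV.span_base)
    fix k assume "k \<in> idx d (t(0 := 1))"
    then show "(\<lambda>l. if l = k then 1 else 0) \<in> slice (normal_tensor d n t) 0 ` {..<t 0}"
      using slice_normal_tensor_0_iota bij_betw_iota_core
      by (intro image_eqI[of _ _ "iota d t k"]) (auto simp: bij_betw_def)
  qed
  finally show ?thesis .
qed

lemma exists_GL_prod_support_below_ranks:
  assumes "S \<in> tensors d n" "\<forall>j\<in>{1..<d}. mrank d n S j = t j"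
  obtains g where "g \<in> GL_prod d n" "\<forall>k. act d n g S k \<noteq> 0 \<longrightarrow> (\<forall>j\<in>{1..<d}. k j < t j)"
proof -
  have "\<exists>G. Defs.invertible_mat (n j) G \<and>
          (\<forall>a<n j. t j \<le> a \<longrightarrow> (\<Sum>b<n j. rscale (G a b) (slice S j b)) = 0)"
    if "j \<in> {1..<d}" for j
    using TV.row_reduction_zero_rows[of "slice S j" "n j" "t j"] assms(2) that
    by (auto simp: mrank_eq_dim_slices invertible_mat_iff_rows_independent)
  then obtain G where G: "\<forall>j\<in>{1..<d}. Defs.invertible_mat (n j) (G j) \<and>
      (\<forall>a<n j. t j \<le> a \<longrightarrow> (\<Sum>b<n j. rscale (G j a b) (slice S j b)) = 0)"
    by metis
  define g where "g = G(0 := id_mat)"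
  have "g \<in> GL_prod d n"
    using G by (auto simp: g_def GL_prod_def invertible_id_mat)
  moreover have "k j < t j" if nz: "act d n g S k \<noteq> 0" and j: "j \<in> {1..<d}" for k j
  proof (rule ccontr)
    assume "\<not> k j < t j"
    have "k \<in> idx d n"
      using nz by (auto simp: act_def split: if_splits)
    then have "k j < n j"
      using j by (auto simp: idx_def)
    then have "(\<Sum>b<n j. rscale (g j (k j) b) (slice S j b)) = 0"
      using G j \<open>\<not> k j < t j\<close> by (simp add: g_def)
    then have "slice (act d n g S) j (k j) = act d n (g(j := id_mat)) 0"
      using slice_act[of j d "k j" n g S] j \<open>k j < n j\<close> by simp
    also have "\<dots> = 0"
      by (rule TV_pair.linear_0[OF linear_act])
    finally have "act d n g S k = 0"
      using slice_apply_upd[of "act d n g S" j k] by simp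
    with nz show False by simp
  qed
  ultimately show ?thesis
    using that by blast
qed

lemma normal_slices_0_independent:
  "inj_on (slice (normal_tensor d n t) 0) {..<t 0}"
  "TV.independent (slice (normal_tensor d n t) 0 ` {..<t 0})"
proof -
  have "\<forall>a<t 0. \<forall>b<t 0. slice (normal_tensor d n t) 0 b (inv_into (idx d (t(0 := 1))) (iota d t) a)
      = (if a = b then 1 else 0)"
    using slice_normal_tensor_0_dual_points by blast
  note dual_points_independent[of "t 0" "slice (normal_tensor d n t) 0", OF this]
  then show "inj_on (slice (normal_tensor d n t) 0) {..<t 0}"
    "TV.independent (slice (normal_tensor d n t) 0 ` {..<t 0})" by simp_all
qed

lemma normal_slices_0_in_span_slices:
  assumes S: "S \<in> tensors d n" "mrank d n S 0 = t 0"
    and supp: "\<forall>k. S k \<noteq> 0 \<longrightarrow> (\<forall>j\<in>{1..<d}. k j < t j)"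
  shows "slice (normal_tensor d n t) 0 ` {..<t 0} \<subseteq> TV.span (slice S 0 ` {..<n 0})"
proof -
  let ?N = "normal_tensor d n t"
  have "slice S 0 b \<in> TV.span (slice ?N 0 ` {..<t 0})" for b
  proof (rule in_span_normal_slices, intro allI impI)
    fix k assume "slice S 0 b k \<noteq> 0"
    then have "k 0 = 0" "S (k(0 := b)) \<noteq> 0"
      by (auto simp: slice_def split: if_splits)
    have "k(0 := b) \<in> idx d n"
      using S(1) \<open>S (k(0 := b)) \<noteq> 0\<close> unfolding tensors_def by blast
    moreover have "\<forall>j\<in>{1..<d}. k j < t j"
      using supp[rule_format, OF \<open>S (k(0 := b)) \<noteq> 0\<close>] by auto
    moreover have "b < n 0"
      using \<open>k(0 := b) \<in> idx d n\<close> d_pos by (auto simp: idx_def)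
    ultimately have "k \<in> idx d n"
      using idx_upd[of 0 d b n k] idx_upd[of 0 d 0 n k] d_pos \<open>k 0 = 0\<close>
      by (simp add: fun_upd_idem)
    with \<open>k 0 = 0\<close> \<open>\<forall>j\<in>{1..<d}. k j < t j\<close> show "k \<in> idx d (t(0 := 1))"
      using idx_core_iff[of k] by blast
  qed
  then have "slice S 0 ` {..<n 0} \<subseteq> TV.span (slice ?N 0 ` {..<t 0})"
    by blast
  moreover have "TV.dim (slice S 0 ` {..<n 0}) = card (slice ?N 0 ` {..<t 0})"
    using S(2) normal_slices_0_independent(1) by (simp add: mrank_eq_dim_slices card_image)
  ultimately have "TV.span (slice S 0 ` {..<n 0}) = TV.span (slice ?N 0 ` {..<t 0})"
    using normal_slices_0_independent(2) by (intro TV.span_eq_if_dim_eq_card_independent) simp_all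
  then show ?thesis
    using TV.span_superset[of "slice ?N 0 ` {..<t 0}"] by simp
qed

lemma exists_GL_prod_to_normal_tensor_if_supported:
  assumes S: "S \<in> tensors d n" "mrank d n S 0 = t 0"
    and supp: "\<forall>k. S k \<noteq> 0 \<longrightarrow> (\<forall>j\<in>{1..<d}. k j < t j)"
  obtains g where "g \<in> GL_prod d n" "act d n g S = normal_tensor d n t"
proof -
  let ?N = "normal_tensor d n t"
  have "TV.dim (slice S 0 ` {..<n 0}) = t 0"
    using S(2) by (simp add: mrank_eq_dim_slices)
  from TV.row_reduction[OF this normal_slices_0_independent normal_slices_0_in_span_slices[OF S supp]]
  obtain g0 where g0: "rows_independent (n 0) g0"
    "\<forall>a<n 0. (\<Sum>b<n 0. rscale (g0 a b) (slice S 0 b)) = (if a < t 0 then slice ?N 0 a else 0)"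
    by (elim exE conjE)
  define g where "g = (\<lambda>i::nat. id_mat)(0 := g0)"
  have "g \<in> GL_prod d n"
    unfolding g_def using g0(1)
    by (intro GL_prod_upd id_mat_in_GL_prod) (simp add: invertible_mat_iff_rows_independent)
  moreover have "act d n g S = ?N"
  proof
    fix k
    show "act d n g S k = ?N k"
    proof (cases "k \<in> idx d n")
      case False
      then show ?thesis by (simp add: act_def normal_tensor_def)
    next
      case True
      then have "k 0 < n 0"
        using d_pos by (auto simp: idx_def)
      have "act d n g S k = (\<Sum>b<n 0. rscale (g0 (k 0) b) (slice S 0 b)) (k(0 := 0))"
        using act_single_mode[OF d_pos True] by (simp add: g_def sum_fun_apply slice_def)
      also have "\<dots> = slice ?N 0 (k 0) (k(0 := 0))"
        using g0(2) slice_normal_tensor_0_zero \<open>k 0 < n 0\<close> by (simp add: not_less)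
      also have "\<dots> = ?N k"
        by (rule slice_apply_upd)
      finally show ?thesis .
    qed
  qed
  ultimately show ?thesis
    using that by blast
qed

lemma Lambda_exists_GL_prod_to_normal_tensor:
  assumes "S \<in> Lambda d n t"
  obtains g where "g \<in> GL_prod d n" "act d n g S = normal_tensor d n t"
proof -
  have S: "S \<in> tensors d n" "\<forall>j<d. mrank d n S j = t j"
    using assms by (auto simp: Lambda_def)
  obtain g1 where g1: "g1 \<in> GL_prod d n" "\<forall>k. act d n g1 S k \<noteq> 0 \<longrightarrow> (\<forall>j\<in>{1..<d}. k j < t j)"
    using exists_GL_prod_support_below_ranks[OF S(1)] S(2) by auto
  have "mrank d n (act d n g1 S) 0 = t 0"
    using mrank_act[OF g1(1) S(1) d_pos] S(2) d_pos by simp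
  then obtain g2 where g2: "g2 \<in> GL_prod d n" "act d n g2 (act d n g1 S) = normal_tensor d n t"
    using exists_GL_prod_to_normal_tensor_if_supported[OF act_in_tensors _ g1(2)] by blast
  show ?thesis
    using that[OF GL_prod_mult[OF g2(1) g1(1)]] g2(2) by (simp add: act_mat_mult)
qed

lemma Lambda_transitive:
  assumes "S \<in> Lambda d n t" "S' \<in> Lambda d n t"
  shows "\<exists>g\<in>GL_prod d n. act d n g S = S'"
proof -
  obtain g where g: "g \<in> GL_prod d n" "act d n g S = normal_tensor d n t"
    using Lambda_exists_GL_prod_to_normal_tensor[OF assms(1)] by blast
  obtain g' where g': "g' \<in> GL_prod d n" "act d n g' S' = normal_tensor d n t"
    using Lambda_exists_GL_prod_to_normal_tensor[OF assms(2)] by blast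
  obtain h where h: "h \<in> GL_prod d n" "\<forall>T\<in>tensors d n. act d n h (act d n g' T) = T"
    using GL_prod_inverse[OF g'(1)] by blast
  have "S' \<in> tensors d n"
    using assms(2) by (simp add: Lambda_def)
  then have "act d n h (normal_tensor d n t) = S'"
    using h(2) g'(2) by metis
  then have "act d n (\<lambda>i. mat_mult (n i) (h i) (g i)) S = S'"
    using g(2) by (simp add: act_mat_mult[symmetric])
  with GL_prod_mult[OF h(1) g(1)] show ?thesis by blast
qed

lemma Lambda_eq_orbit_normal_tensor:
  "Lambda d n t = (\<lambda>g. act d n g (normal_tensor d n t)) ` GL_prod d n"
  using Lambda_transitive[OF normal_tensor_in_Lambda] act_in_Lambda[OF _ normal_tensor_in_Lambda]
  by blast

end

theorem mainTheorem7:
  fixes d :: nat and n t :: "nat \<Rightarrow> nat"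
  assumes "d \<ge> 3"
    and "\<forall>i<d. n i \<ge> 2"
    and "\<forall>i<d. 0 < t i \<and> t i \<le> n i"
    and "t 0 = (\<Prod>i\<in>{1..<d}. t i)"
  shows "(\<forall>S\<in>Lambda d n t. \<forall>S'\<in>Lambda d n t. \<exists>g\<in>GL_prod d n. act d n g S = S')
       \<and> Lambda d n t = (\<lambda>g. act d n g (normal_tensor d n t)) ` GL_prod d n"
proof -
  have "0 < d" using assms(1) by simp
  then show ?thesis
    using Lambda_transitive[OF \<open>0 < d\<close> assms(3,4)] Lambda_eq_orbit_normal_tensor[OF \<open>0 < d\<close> assms(3,4)]
    by blast
qed

end
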